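(* Let $K$ be a field of characteristic $0$, $S=K[x_1,\ldots,x_n]$, and let $G$ be a finite simple graph on vertex set $[n]$ with edge set $E(G)$. Let $I\subset S$ be the vertex cover ideal of $G$, i.e. the ideal generated by all monomials $\prod_{i\in C}x_i$ with $C\subseteq[n]$ a vertex cover of $G$ (so $I=\bigcap_{\{i,j\}\in E(G)}(x_i,x_j)$), and let $I^{(m)}=\bigcap_{\{i,j\}\in E(G)}(x_i,x_j)^m$. Suppose that $(I^{(2)})^2\subseteq I^3$. Then $(I^{(k-1)})^2\subseteq I^k$ for all $k\ge2$. In particular, for every $k\ge 2$, every homogeneous ideal $J$ with $I^k\subseteq J\subseteq I^{(k)}$ is strongly Golod, i.e. $\partial(J)^2\subseteq J$, where $\partial(J)$ is the ideal generated by all $\partial f/\partial x_i$ with $f\in J$.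
   Context: A vertex cover of $G$ is a subset $C\subseteq[n]$ with $C\cap\{i,j\}\ne\emptyset$ for all edges $\{i,j\}$ of $G$. *)

theory Defs
  imports "HOL-Library.Poly_Mapping"
begin

text \<open>Polynomials over K in variables x_i (i :: nat), represented as finitely supported
  maps from monomials (finitely supported exponent vectors) to coefficients.\<close>

type_synonym 'a mpoly = "(nat \<Rightarrow>\<^sub>0 nat) \<Rightarrow>\<^sub>0 'a"

definition polyring :: "nat \<Rightarrow> ('a::comm_ring_1) mpoly set" where
  "polyring n = {p :: 'a mpoly. \<forall>m\<in>Poly_Mapping.keys p. Poly_Mapping.keys m \<subseteq> {1..n}}"

definition var :: "nat \<Rightarrow> ('a::comm_ring_1) mpoly" where
  "var i = Poly_Mapping.single (Poly_Mapping.single i 1) 1"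

definition gen_ideal :: "nat \<Rightarrow> ('a::comm_ring_1) mpoly set \<Rightarrow> 'a mpoly set" where
  "gen_ideal n A = {\<Sum>a\<in>F. r a * a | F r. finite F \<and> F \<subseteq> A \<and> (\<forall>a\<in>F. r a \<in> polyring n)}"

definition ideal_prod :: "nat \<Rightarrow> ('a::comm_ring_1) mpoly set \<Rightarrow> 'a mpoly set \<Rightarrow> 'a mpoly set" where
  "ideal_prod n I J = gen_ideal n {a * b | a b. a \<in> I \<and> b \<in> J}"

fun ideal_pow :: "nat \<Rightarrow> ('a::comm_ring_1) mpoly set \<Rightarrow> nat \<Rightarrow> 'a mpoly set" where
  "ideal_pow n I 0 = polyring n"
| "ideal_pow n I (Suc k) = ideal_prod n (ideal_pow n I k) I"

definition simple_graph_on :: "nat \<Rightarrow> nat set set \<Rightarrow> bool" where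
  "simple_graph_on n E \<longleftrightarrow> (\<forall>e\<in>E. \<exists>i j. e = {i, j} \<and> i \<noteq> j \<and> i \<in> {1..n} \<and> j \<in> {1..n})"

definition vertex_cover :: "nat \<Rightarrow> nat set set \<Rightarrow> nat set \<Rightarrow> bool" where
  "vertex_cover n E C \<longleftrightarrow> C \<subseteq> {1..n} \<and> (\<forall>e\<in>E. C \<inter> e \<noteq> {})"

definition cover_ideal :: "nat \<Rightarrow> nat set set \<Rightarrow> ('a::comm_ring_1) mpoly set" where
  "cover_ideal n E = gen_ideal n {\<Prod>i\<in>C. var i | C. vertex_cover n E C}"

definition cover_symb_pow :: "nat \<Rightarrow> nat set set \<Rightarrow> nat \<Rightarrow> ('a::comm_ring_1) mpoly set" where
  "cover_symb_pow n E m = polyring n \<inter> (\<Inter>e\<in>E. ideal_pow n (gen_ideal n (var ` e)) m)"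

definition total_deg :: "(nat \<Rightarrow>\<^sub>0 nat) \<Rightarrow> nat" where
  "total_deg m = (\<Sum>i\<in>Poly_Mapping.keys m. Poly_Mapping.lookup m i)"

definition homogeneous :: "('a::comm_ring_1) mpoly \<Rightarrow> bool" where
  "homogeneous p \<longleftrightarrow> (\<forall>m\<in>Poly_Mapping.keys p. \<forall>m'\<in>Poly_Mapping.keys p. total_deg m = total_deg m')"

definition homogeneous_ideal :: "nat \<Rightarrow> ('a::comm_ring_1) mpoly set \<Rightarrow> bool" where
  "homogeneous_ideal n J \<longleftrightarrow>
     (\<exists>A. A \<subseteq> polyring n \<and> (\<forall>a\<in>A. homogeneous a) \<and> J = gen_ideal n A)"

definition pderiv_var :: "nat \<Rightarrow> ('a::comm_ring_1) mpoly \<Rightarrow> 'a mpoly" where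
  "pderiv_var i f = (\<Sum>m\<in>Poly_Mapping.keys f.
      Poly_Mapping.single (m - Poly_Mapping.single i 1) (of_nat (Poly_Mapping.lookup m i) * Poly_Mapping.lookup f m))"

definition deriv_ideal :: "nat \<Rightarrow> ('a::comm_ring_1) mpoly set \<Rightarrow> 'a mpoly set" where
  "deriv_ideal n J = gen_ideal n {pderiv_var i f | i f. i \<in> {1..n} \<and> f \<in> J}"

definition strongly_golod :: "nat \<Rightarrow> ('a::comm_ring_1) mpoly set \<Rightarrow> bool" where
  "strongly_golod n J \<longleftrightarrow> ideal_pow n (deriv_ideal n J) 2 \<subseteq> J"

end

theory Submission
  imports Defs
begin

text \<open>All ideals involved are monomial ideals, so every inclusion is a statement about exponent
  vectors: x^\<mu> lies in I^(m) iff \<mu>_i + \<mu>_j \<ge> m for every edge ij, and in I^k iff \<mu> dominates a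
  sum of k indicator vectors of vertex covers. The hypothesis says that the sum of two exponents of
  I^(2) dominates three covers. An exponent of I^(p+2) splits into one of I^(2) and one of I^(p), so
  induction on p, starting from I^(1) = I, shows that the sum of two exponents of I^(p) dominates
  p + 1 covers. A partial derivative lowers the symbolic degree by at most one, which gives the
  strong Golod property.\<close>

section \<open>Monomial ideals\<close>

abbreviation monom :: "(nat \<Rightarrow>\<^sub>0 nat) \<Rightarrow> 'a::comm_ring_1 mpoly" where
  "monom \<mu> \<equiv> Poly_Mapping.single \<mu> 1"

definition monomial_ideal :: "nat \<Rightarrow> ((nat \<Rightarrow>\<^sub>0 nat) \<Rightarrow> bool) \<Rightarrow> 'a::comm_ring_1 mpoly set" where
  "monomial_ideal n U = {p. \<forall>\<mu>\<in>Poly_Mapping.keys p. Poly_Mapping.keys \<mu> \<subseteq> {1..n} \<and> U \<mu>}"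

definition upward_closed :: "((nat \<Rightarrow>\<^sub>0 nat) \<Rightarrow> bool) \<Rightarrow> bool" where
  "upward_closed U \<longleftrightarrow> (\<forall>\<mu> \<nu>. U \<mu> \<longrightarrow> U (\<mu> + \<nu>))"

lemma keys_add_exponents:
  "Poly_Mapping.keys ((\<mu> :: nat \<Rightarrow>\<^sub>0 nat) + \<nu>) = Poly_Mapping.keys \<mu> \<union> Poly_Mapping.keys \<nu>"
  by (auto simp: in_keys_iff lookup_add)

lemma keys_diff_exponents:
  "Poly_Mapping.keys ((\<mu> :: nat \<Rightarrow>\<^sub>0 nat) - \<nu>) \<subseteq> Poly_Mapping.keys \<mu>"
  by (auto simp: in_keys_iff lookup_minus)

lemma polyring_eq_monomial_ideal: "polyring n = monomial_ideal n (\<lambda>_. True)"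
  by (simp add: polyring_def monomial_ideal_def)

lemma monom_mem_monomial_ideal_iff:
  "(monom \<mu> :: 'a::comm_ring_1 mpoly) \<in> monomial_ideal n U \<longleftrightarrow> Poly_Mapping.keys \<mu> \<subseteq> {1..n} \<and> U \<mu>"
  by (simp add: monomial_ideal_def)

lemma monomial_ideal_zero: "0 \<in> monomial_ideal n U"
  by (simp add: monomial_ideal_def)

lemma monomial_ideal_add:
  "p \<in> monomial_ideal n U \<Longrightarrow> q \<in> monomial_ideal n U \<Longrightarrow> p + q \<in> monomial_ideal n U"
  using keys_add[of p q] unfolding monomial_ideal_def by blast

lemma monomial_ideal_sum:
  "(\<And>x. x \<in> F \<Longrightarrow> f x \<in> monomial_ideal n U) \<Longrightarrow> sum f F \<in> monomial_ideal n U"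
  by (induction F rule: infinite_finite_induct) (simp_all add: monomial_ideal_zero monomial_ideal_add)

lemma monomial_ideal_mult:
  assumes "p \<in> monomial_ideal n U" "q \<in> monomial_ideal n V"
    and "\<And>\<mu> \<nu>. Poly_Mapping.keys \<mu> \<subseteq> {1..n} \<Longrightarrow> Poly_Mapping.keys \<nu> \<subseteq> {1..n} \<Longrightarrow>
      U \<mu> \<Longrightarrow> V \<nu> \<Longrightarrow> W (\<mu> + \<nu>)"
  shows "p * q \<in> monomial_ideal n W"
  unfolding monomial_ideal_def
proof (intro CollectI ballI)
  fix \<kappa> assume "\<kappa> \<in> Poly_Mapping.keys (p * q)"
  then obtain \<mu> \<nu> where "\<kappa> = \<mu> + \<nu>" "\<mu> \<in> Poly_Mapping.keys p" "\<nu> \<in> Poly_Mapping.keys q"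
    using keys_mult by blast
  with assms show "Poly_Mapping.keys \<kappa> \<subseteq> {1..n} \<and> W \<kappa>"
    by (auto simp: monomial_ideal_def keys_add_exponents)
qed

lemma polyring_add: "p \<in> polyring n \<Longrightarrow> q \<in> polyring n \<Longrightarrow> p + q \<in> polyring n"
  unfolding polyring_eq_monomial_ideal by (rule monomial_ideal_add)

lemma polyring_mult: "p \<in> polyring n \<Longrightarrow> q \<in> polyring n \<Longrightarrow> p * q \<in> polyring n"
  unfolding polyring_eq_monomial_ideal by (rule monomial_ideal_mult)

lemma zero_mem_polyring: "0 \<in> polyring n"
  by (simp add: polyring_def)

lemma one_mem_polyring: "1 \<in> polyring n"
  by (simp add: polyring_def)

lemma const_mem_polyring: "Poly_Mapping.single 0 c \<in> polyring n"
  by (simp add: polyring_def)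

lemma gen_ideal_base: "a \<in> A \<Longrightarrow> a \<in> gen_ideal n A"
  unfolding gen_ideal_def
  by (intro CollectI exI[of _ "{a}"] exI[of _ "\<lambda>_. 1"]) (auto simp: one_mem_polyring)

lemma gen_ideal_add:
  assumes "p \<in> gen_ideal n A" "q \<in> gen_ideal n A"
  shows "p + q \<in> gen_ideal n A"
proof -
  obtain F r where F: "p = (\<Sum>a\<in>F. r a * a)" "finite F" "F \<subseteq> A" "\<forall>a\<in>F. r a \<in> polyring n"
    using assms(1) unfolding gen_ideal_def by blast
  obtain G s where G: "q = (\<Sum>a\<in>G. s a * a)" "finite G" "G \<subseteq> A" "\<forall>a\<in>G. s a \<in> polyring n"
    using assms(2) unfolding gen_ideal_def by blast
  define r' where "r' a = (if a \<in> F then r a else 0)" for a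
  define s' where "s' a = (if a \<in> G then s a else 0)" for a
  have "p = (\<Sum>a\<in>F \<union> G. r' a * a)"
    unfolding F(1) by (rule sum.mono_neutral_cong_left) (use F(2) G(2) in \<open>auto simp: r'_def\<close>)
  moreover have "q = (\<Sum>a\<in>F \<union> G. s' a * a)"
    unfolding G(1) by (rule sum.mono_neutral_cong_left) (use F(2) G(2) in \<open>auto simp: s'_def\<close>)
  ultimately have "p + q = (\<Sum>a\<in>F \<union> G. (r' a + s' a) * a)"
    by (simp add: sum.distrib distrib_right)
  moreover have "r' a + s' a \<in> polyring n" for a
    using F(4) G(4) by (auto simp: r'_def s'_def zero_mem_polyring intro: polyring_add)
  ultimately show ?thesis
    unfolding gen_ideal_def
    by (intro CollectI exI[of _ "F \<union> G"] exI[of _ "\<lambda>a. r' a + s' a"]) (use F G in auto)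
qed

lemma gen_ideal_mult:
  assumes "q \<in> polyring n" "p \<in> gen_ideal n A"
  shows "q * p \<in> gen_ideal n A"
proof -
  obtain F r where F: "p = (\<Sum>a\<in>F. r a * a)" "finite F" "F \<subseteq> A" "\<forall>a\<in>F. r a \<in> polyring n"
    using assms(2) unfolding gen_ideal_def by blast
  have "q * p = (\<Sum>a\<in>F. (q * r a) * a)"
    using F(1) by (simp add: sum_distrib_left mult.assoc)
  moreover have "\<forall>a\<in>F. q * r a \<in> polyring n"
    using F(4) assms(1) by (auto intro: polyring_mult)
  ultimately show ?thesis
    unfolding gen_ideal_def by (intro CollectI exI[of _ F] exI[of _ "\<lambda>a. q * r a"]) (use F in auto)
qed

lemma gen_ideal_sum:
  "(\<And>x. x \<in> F \<Longrightarrow> f x \<in> gen_ideal n A) \<Longrightarrow> sum f F \<in> gen_ideal n A"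
proof (induction F rule: infinite_finite_induct)
  case (infinite F)
  then show ?case
    unfolding gen_ideal_def by (auto intro!: exI[of _ "{}"])
next
  case empty
  then show ?case
    unfolding gen_ideal_def by (auto intro!: exI[of _ "{}"])
qed (simp add: gen_ideal_add)

lemma gen_ideal_subset_monomial_ideal:
  assumes "A \<subseteq> monomial_ideal n U" "upward_closed U"
  shows "gen_ideal n A \<subseteq> monomial_ideal n U"
proof
  fix p assume "p \<in> gen_ideal n A"
  then obtain F r where F: "p = (\<Sum>a\<in>F. r a * a)" "F \<subseteq> A" "\<forall>a\<in>F. r a \<in> polyring n"
    unfolding gen_ideal_def by blast
  have "r a * a \<in> monomial_ideal n U" if "a \<in> F" for a
  proof (rule monomial_ideal_mult[of _ n "\<lambda>_. True" _ U])
    show "r a \<in> monomial_ideal n (\<lambda>_. True)" "a \<in> monomial_ideal n U"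
      using F(2,3) that assms(1) polyring_eq_monomial_ideal by blast+
    show "U (\<mu> + \<nu>)" if "U \<nu>" for \<mu> \<nu>
      using assms(2) that unfolding upward_closed_def by (metis add.commute)
  qed
  then show "p \<in> monomial_ideal n U"
    unfolding F(1) by (rule monomial_ideal_sum)
qed

lemma monomial_ideal_subset_gen_ideal:
  fixes A :: "'a::comm_ring_1 mpoly set"
  assumes "\<And>\<mu>. Poly_Mapping.keys \<mu> \<subseteq> {1..n} \<Longrightarrow> U \<mu> \<Longrightarrow> monom \<mu> \<in> gen_ideal n A"
  shows "monomial_ideal n U \<subseteq> gen_ideal n A"
proof
  fix p :: "'a mpoly" assume p: "p \<in> monomial_ideal n U"
  have "p = (\<Sum>\<mu>\<in>Poly_Mapping.keys p. Poly_Mapping.single 0 (Poly_Mapping.lookup p \<mu>) * monom \<mu>)"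
    by (rule poly_mapping_eqI) (simp add: mult_single lookup_sum lookup_single when_def in_keys_iff)
  also have "\<dots> \<in> gen_ideal n A"
    using p assms by (intro gen_ideal_sum gen_ideal_mult const_mem_polyring) (auto simp: monomial_ideal_def)
  finally show "p \<in> gen_ideal n A" .
qed

lemma mult_mem_ideal_prod: "a \<in> I \<Longrightarrow> b \<in> J \<Longrightarrow> a * b \<in> ideal_prod n I J"
  unfolding ideal_prod_def by (rule gen_ideal_base) blast

lemma ideal_prod_subset_monomial_ideal:
  assumes "I \<subseteq> monomial_ideal n U" "J \<subseteq> monomial_ideal n V" "upward_closed W"
    and "\<And>\<mu> \<nu>. Poly_Mapping.keys \<mu> \<subseteq> {1..n} \<Longrightarrow> Poly_Mapping.keys \<nu> \<subseteq> {1..n} \<Longrightarrow>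
      U \<mu> \<Longrightarrow> V \<nu> \<Longrightarrow> W (\<mu> + \<nu>)"
  shows "ideal_prod n I J \<subseteq> monomial_ideal n W"
  unfolding ideal_prod_def
  using assms by (intro gen_ideal_subset_monomial_ideal) (auto intro: monomial_ideal_mult)

lemma mult_mem_ideal_pow_two: "a \<in> S \<Longrightarrow> b \<in> S \<Longrightarrow> a * b \<in> ideal_pow n S 2"
  using mult_mem_ideal_prod[OF mult_mem_ideal_prod[OF one_mem_polyring], of a S b S n]
  by (simp add: numeral_2_eq_2)

lemma ideal_pow_two_subset_monomial_ideal:
  assumes S: "S \<subseteq> monomial_ideal n U" and "upward_closed U" "upward_closed W"
    and UW: "\<And>\<mu> \<nu>. Poly_Mapping.keys \<mu> \<subseteq> {1..n} \<Longrightarrow> Poly_Mapping.keys \<nu> \<subseteq> {1..n} \<Longrightarrow>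
      U \<mu> \<Longrightarrow> U \<nu> \<Longrightarrow> W (\<mu> + \<nu>)"
  shows "ideal_pow n S 2 \<subseteq> monomial_ideal n W"
proof -
  have "ideal_prod n (polyring n) S \<subseteq> monomial_ideal n U"
  proof (rule ideal_prod_subset_monomial_ideal[of _ n "\<lambda>_. True" _ U])
    show "U (\<mu> + \<nu>)" if "U \<nu>" for \<mu> \<nu>
      using \<open>upward_closed U\<close> that unfolding upward_closed_def by (metis add.commute)
  qed (use S \<open>upward_closed U\<close> in \<open>simp_all add: polyring_eq_monomial_ideal\<close>)
  then show ?thesis
    unfolding numeral_2_eq_2 ideal_pow.simps
    by (rule ideal_prod_subset_monomial_ideal[OF _ S \<open>upward_closed W\<close> UW])
qed

lemma pderiv_var_mem_monomial_ideal:
  assumes f: "f \<in> monomial_ideal n U" and UV: "\<And>\<mu>. U \<mu> \<Longrightarrow> V (\<mu> - Poly_Mapping.single i 1)"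
  shows "pderiv_var i f \<in> monomial_ideal n V"
  unfolding pderiv_var_def
proof (rule monomial_ideal_sum)
  fix \<mu> assume "\<mu> \<in> Poly_Mapping.keys f"
  then have "Poly_Mapping.keys \<mu> \<subseteq> {1..n}" "U \<mu>"
    using f unfolding monomial_ideal_def by blast+
  then show "Poly_Mapping.single (\<mu> - Poly_Mapping.single i 1)
      (of_nat (Poly_Mapping.lookup \<mu> i) * Poly_Mapping.lookup f \<mu>) \<in> monomial_ideal n V"
    using UV keys_diff_exponents[of \<mu>] by (auto simp: monomial_ideal_def)
qed

section \<open>Powers of the cover ideal and its symbolic powers\<close>

lemma minus_single_add_single:
  "Poly_Mapping.lookup \<mu> k \<noteq> 0 \<Longrightarrow> (\<mu> - Poly_Mapping.single k 1) + Poly_Mapping.single k 1 = (\<mu> :: nat \<Rightarrow>\<^sub>0 nat)"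
  by (rule poly_mapping_eqI) (auto simp: lookup_add lookup_minus lookup_single when_def)

lemma var_eq_monom: "var i = monom (Poly_Mapping.single i 1)"
  by (simp add: var_def)

lemma pow_gen_ideal_vars:
  assumes "finite A" "A \<subseteq> {1..n}"
  shows "ideal_pow n (gen_ideal n (var ` A) :: 'a::comm_ring_1 mpoly set) m
       = monomial_ideal n (\<lambda>\<mu>. m \<le> (\<Sum>i\<in>A. Poly_Mapping.lookup \<mu> i))"
proof (induction m)
  case 0
  show ?case by (simp add: polyring_eq_monomial_ideal)
next
  case (Suc m)
  let ?G = "gen_ideal n (var ` A) :: 'a mpoly set"
  let ?P = "\<lambda>m \<mu>. m \<le> (\<Sum>i\<in>A. Poly_Mapping.lookup \<mu> i)"
  have sum_add: "(\<Sum>i\<in>A. Poly_Mapping.lookup (\<mu> + \<nu>) i)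
      = (\<Sum>i\<in>A. Poly_Mapping.lookup \<mu> i) + (\<Sum>i\<in>A. Poly_Mapping.lookup \<nu> i)" for \<mu> \<nu> :: "nat \<Rightarrow>\<^sub>0 nat"
    by (simp add: lookup_add sum.distrib)
  have sum_single: "(\<Sum>i\<in>A. Poly_Mapping.lookup (Poly_Mapping.single k 1) i) = (1 :: nat)" if "k \<in> A" for k
    using assms(1) that by (simp add: lookup_single when_def)
  have up: "upward_closed (?P k)" for k
    by (auto simp: upward_closed_def sum_add)
  have "var k \<in> monomial_ideal n (?P 1)" if "k \<in> A" for k
    using that assms(2) sum_single[OF that] unfolding var_eq_monom monom_mem_monomial_ideal_iff by auto
  then have gens: "?G \<subseteq> monomial_ideal n (?P 1)"
    by (intro gen_ideal_subset_monomial_ideal up) auto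
  show ?case
  proof
    show "ideal_pow n ?G (Suc m) \<subseteq> monomial_ideal n (?P (Suc m))"
      unfolding ideal_pow.simps Suc.IH
      by (rule ideal_prod_subset_monomial_ideal[OF order.refl gens up]) (simp add: sum_add)
    show "monomial_ideal n (?P (Suc m)) \<subseteq> ideal_pow n ?G (Suc m)"
      unfolding ideal_pow.simps ideal_prod_def Suc.IH
    proof (rule monomial_ideal_subset_gen_ideal)
      fix \<mu> :: "nat \<Rightarrow>\<^sub>0 nat"
      assume \<mu>: "Poly_Mapping.keys \<mu> \<subseteq> {1..n}" "?P (Suc m) \<mu>"
      have "\<exists>k\<in>A. Poly_Mapping.lookup \<mu> k \<noteq> 0"
      proof (rule ccontr)
        assume "\<not> (\<exists>k\<in>A. Poly_Mapping.lookup \<mu> k \<noteq> 0)"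
        then have "(\<Sum>i\<in>A. Poly_Mapping.lookup \<mu> i) = 0"
          by simp
        with \<mu>(2) show False
          by simp
      qed
      then obtain k where k: "k \<in> A" "Poly_Mapping.lookup \<mu> k \<noteq> 0"
        by blast
      define \<mu>' where "\<mu>' = \<mu> - Poly_Mapping.single k 1"
      have \<mu>_eq: "\<mu> = \<mu>' + Poly_Mapping.single k 1"
        unfolding \<mu>'_def using minus_single_add_single[OF k(2)] by simp
      have "?P m \<mu>'"
        using \<mu>(2) k(1) unfolding \<mu>_eq sum_add sum_single[OF k(1)] by simp
      moreover have "Poly_Mapping.keys \<mu>' \<subseteq> {1..n}"
        using \<mu>(1) keys_diff_exponents unfolding \<mu>'_def by blast
      ultimately have "monom \<mu>' \<in> monomial_ideal n (?P m)"
        by (simp add: monom_mem_monomial_ideal_iff)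
      moreover have "var k \<in> ?G"
        using k(1) by (intro gen_ideal_base) simp
      moreover have "(monom \<mu> :: 'a mpoly) = monom \<mu>' * var k"
        by (simp add: \<mu>_eq var_eq_monom mult_single)
      ultimately show "monom \<mu> \<in> gen_ideal n {a * b |a b. a \<in> monomial_ideal n (?P m) \<and> b \<in> ?G}"
        by (intro gen_ideal_base) blast
    qed
  qed
qed

definition symb_monomial :: "nat set set \<Rightarrow> nat \<Rightarrow> (nat \<Rightarrow>\<^sub>0 nat) \<Rightarrow> bool" where
  "symb_monomial E m \<mu> \<longleftrightarrow>
     (\<forall>i j. {i, j} \<in> E \<longrightarrow> i \<noteq> j \<longrightarrow> m \<le> Poly_Mapping.lookup \<mu> i + Poly_Mapping.lookup \<mu> j)"

lemma upward_closed_symb_monomial: "upward_closed (symb_monomial E m)"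
  unfolding upward_closed_def
proof (intro allI impI)
  fix \<mu> \<nu> :: "nat \<Rightarrow>\<^sub>0 nat"
  assume "symb_monomial E m \<mu>"
  then show "symb_monomial E m (\<mu> + \<nu>)"
    unfolding symb_monomial_def lookup_add by (meson add_mono le_add1 order_trans)
qed

lemma simple_graph_on_edgeE:
  assumes "simple_graph_on n E" "e \<in> E"
  obtains i j where "e = {i, j}" "i \<noteq> j" "i \<in> {1..n}" "j \<in> {1..n}"
proof -
  have "\<exists>i j. e = {i, j} \<and> i \<noteq> j \<and> i \<in> {1..n} \<and> j \<in> {1..n}"
    using assms unfolding simple_graph_on_def by (rule bspec)
  then show thesis
    using that by (elim exE conjE)
qed

lemma cover_symb_pow_eq_monomial_ideal:
  assumes graph: "simple_graph_on n E"
  shows "(cover_symb_pow n E m :: 'a::comm_ring_1 mpoly set) = monomial_ideal n (symb_monomial E m)"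
proof -
  have edges: "(\<forall>e\<in>E. P e) \<longleftrightarrow> (\<forall>i j. {i, j} \<in> E \<longrightarrow> i \<noteq> j \<longrightarrow> P {i, j})" for P
    by (metis simple_graph_on_edgeE[OF graph])
  have edge: "(ideal_pow n (gen_ideal n (var ` {i, j})) m :: 'a mpoly set)
      = monomial_ideal n (\<lambda>\<mu>. m \<le> Poly_Mapping.lookup \<mu> i + Poly_Mapping.lookup \<mu> j)"
    if ij: "{i, j} \<in> E" "i \<noteq> j" for i j
  proof -
    obtain i' j' where "{i, j} = {i', j'}" "i' \<noteq> j'" "i' \<in> {1..n}" "j' \<in> {1..n}"
      by (rule simple_graph_on_edgeE[OF graph ij(1)])
    then have "{i, j} \<subseteq> {1..n}"
      by simp
    then show ?thesis
      using pow_gen_ideal_vars[of "{i, j}" n m] ij(2) by simp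
  qed
  show ?thesis
  proof (rule set_eqI)
    fix p :: "'a mpoly"
    have "p \<in> cover_symb_pow n E m \<longleftrightarrow> p \<in> polyring n \<and> (\<forall>i j. {i, j} \<in> E \<longrightarrow> i \<noteq> j \<longrightarrow>
        p \<in> monomial_ideal n (\<lambda>\<mu>. m \<le> Poly_Mapping.lookup \<mu> i + Poly_Mapping.lookup \<mu> j))"
      unfolding cover_symb_pow_def using edges[of "\<lambda>e. p \<in> ideal_pow n (gen_ideal n (var ` e)) m"] edge
      by simp
    also have "\<dots> \<longleftrightarrow> p \<in> monomial_ideal n (symb_monomial E m)"
      unfolding monomial_ideal_def polyring_def symb_monomial_def by blast
    finally show "p \<in> cover_symb_pow n E m \<longleftrightarrow> p \<in> monomial_ideal n (symb_monomial E m)" .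
  qed
qed

definition indicator_exp :: "nat set \<Rightarrow> nat \<Rightarrow>\<^sub>0 nat" where
  "indicator_exp C = (\<Sum>i\<in>C. Poly_Mapping.single i 1)"

lemma lookup_indicator_exp:
  "finite C \<Longrightarrow> Poly_Mapping.lookup (indicator_exp C) i = (if i \<in> C then 1 else 0)"
  by (simp add: indicator_exp_def lookup_sum lookup_single when_def)

lemma keys_indicator_exp: "finite C \<Longrightarrow> Poly_Mapping.keys (indicator_exp C) = C"
  by (auto simp: in_keys_iff lookup_indicator_exp split: if_splits)

lemma prod_var_eq_monom: "finite C \<Longrightarrow> (\<Prod>i\<in>C. var i) = monom (indicator_exp C)"
  by (induction C rule: finite_induct) (simp_all add: indicator_exp_def var_def mult_single)

lemma vertex_cover_finite: "vertex_cover n E C \<Longrightarrow> finite C"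
  unfolding vertex_cover_def using finite_subset by blast

fun cover_monomial :: "nat \<Rightarrow> nat set set \<Rightarrow> nat \<Rightarrow> (nat \<Rightarrow>\<^sub>0 nat) \<Rightarrow> bool" where
  "cover_monomial n E 0 \<mu> = True"
| "cover_monomial n E (Suc k) \<mu> =
     (\<exists>C \<nu> \<rho>. vertex_cover n E C \<and> cover_monomial n E k \<nu> \<and> \<mu> = \<nu> + indicator_exp C + \<rho>)"

lemma cover_monomial_add_right: "cover_monomial n E k \<mu> \<Longrightarrow> cover_monomial n E k (\<mu> + \<rho>)"
proof (induction k arbitrary: \<mu>)
  case (Suc k)
  then obtain C \<nu> \<sigma> where "vertex_cover n E C" "cover_monomial n E k \<nu>" "\<mu> = \<nu> + indicator_exp C + \<sigma>"
    by auto
  moreover from this(3) have "\<mu> + \<rho> = \<nu> + indicator_exp C + (\<sigma> + \<rho>)"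
    by (simp add: add.assoc)
  ultimately show ?case
    by (simp only: cover_monomial.simps) blast
qed simp

lemma upward_closed_cover_monomial: "upward_closed (cover_monomial n E k)"
  by (simp add: upward_closed_def cover_monomial_add_right)

lemma cover_monomial_add:
  "cover_monomial n E a \<mu> \<Longrightarrow> cover_monomial n E b \<nu> \<Longrightarrow> cover_monomial n E (a + b) (\<mu> + \<nu>)"
proof (induction a arbitrary: \<mu>)
  case 0
  then show ?case
    using cover_monomial_add_right[of n E b \<nu> \<mu>] by (simp add: add.commute)
next
  case (Suc a)
  then obtain C \<mu>' \<rho> where C: "vertex_cover n E C" "cover_monomial n E a \<mu>'" "\<mu> = \<mu>' + indicator_exp C + \<rho>"
    by auto
  then have "cover_monomial n E (a + b) (\<mu>' + \<nu>)"
    using Suc by blast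
  moreover have "\<mu> + \<nu> = (\<mu>' + \<nu>) + indicator_exp C + \<rho>"
    using C(3) by (simp add: ac_simps)
  ultimately show ?case
    using C(1) by auto
qed

lemma cover_monomial_Suc_imp: "cover_monomial n E (Suc k) \<mu> \<Longrightarrow> cover_monomial n E k \<mu>"
  using cover_monomial_add_right[of n E k] by (auto simp: add.assoc)

lemma cover_ideal_subset_monomial_ideal:
  "(cover_ideal n E :: 'a::comm_ring_1 mpoly set) \<subseteq> monomial_ideal n (cover_monomial n E 1)"
  unfolding cover_ideal_def
proof (intro gen_ideal_subset_monomial_ideal upward_closed_cover_monomial subsetI)
  fix a :: "'a mpoly"
  assume "a \<in> {\<Prod>i\<in>C. var i | C. vertex_cover n E C}"
  then obtain C where C: "a = (\<Prod>i\<in>C. var i)" "vertex_cover n E C"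
    by blast
  moreover have "indicator_exp C = 0 + indicator_exp C + 0"
    by simp
  ultimately have "cover_monomial n E 1 (indicator_exp C)"
    unfolding One_nat_def cover_monomial.simps by blast
  moreover have "Poly_Mapping.keys (indicator_exp C) \<subseteq> {1..n}"
    using C(2) by (simp add: keys_indicator_exp vertex_cover_finite vertex_cover_def)
  ultimately show "a \<in> monomial_ideal n (cover_monomial n E 1)"
    using C vertex_cover_finite by (simp add: prod_var_eq_monom monom_mem_monomial_ideal_iff)
qed

lemma pow_cover_ideal_eq_monomial_ideal:
  "ideal_pow n (cover_ideal n E :: 'a::comm_ring_1 mpoly set) k = monomial_ideal n (cover_monomial n E k)"
proof (induction k)
  case 0
  show ?case by (simp add: polyring_eq_monomial_ideal)
next
  case (Suc k)
  let ?I = "cover_ideal n E :: 'a mpoly set"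
  show ?case
  proof
    show "ideal_pow n ?I (Suc k) \<subseteq> monomial_ideal n (cover_monomial n E (Suc k))"
      unfolding ideal_pow.simps Suc.IH
      using cover_monomial_add[of n E k _ 1]
      by (intro ideal_prod_subset_monomial_ideal[OF order.refl cover_ideal_subset_monomial_ideal
            upward_closed_cover_monomial]) simp
    show "monomial_ideal n (cover_monomial n E (Suc k)) \<subseteq> ideal_pow n ?I (Suc k)"
      unfolding ideal_pow.simps ideal_prod_def Suc.IH
    proof (rule monomial_ideal_subset_gen_ideal)
      fix \<mu> :: "nat \<Rightarrow>\<^sub>0 nat"
      assume \<mu>: "Poly_Mapping.keys \<mu> \<subseteq> {1..n}" "cover_monomial n E (Suc k) \<mu>"
      then obtain C \<nu> \<rho> where C: "vertex_cover n E C" "cover_monomial n E k \<nu>"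
        and \<mu>_eq: "\<mu> = (\<nu> + \<rho>) + indicator_exp C"
        by (auto simp: ac_simps)
      have "monom (\<nu> + \<rho>) \<in> monomial_ideal n (cover_monomial n E k)"
        using \<mu>(1) C(2) cover_monomial_add_right
        by (auto simp: monom_mem_monomial_ideal_iff \<mu>_eq keys_add_exponents)
      moreover have "(\<Prod>i\<in>C. var i) \<in> ?I"
        unfolding cover_ideal_def using C(1) by (intro gen_ideal_base) blast
      moreover have "(monom \<mu> :: 'a mpoly) = monom (\<nu> + \<rho>) * (\<Prod>i\<in>C. var i)"
        using C(1) by (simp add: \<mu>_eq prod_var_eq_monom vertex_cover_finite mult_single)
      ultimately show "monom \<mu> \<in> gen_ideal n {a * b |a b. a \<in> monomial_ideal n (cover_monomial n E k) \<and> b \<in> ?I}"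
        by (intro gen_ideal_base) blast
    qed
  qed
qed

section \<open>Squares of symbolic powers\<close>

lemma symb_monomial_one_imp_cover_monomial:
  assumes graph: "simple_graph_on n E" and symb: "symb_monomial E 1 \<mu>"
  shows "cover_monomial n E 1 \<mu>"
proof -
  let ?C = "Poly_Mapping.keys \<mu> \<inter> {1..n}"
  have "vertex_cover n E ?C"
    unfolding vertex_cover_def
  proof (intro conjI ballI)
    fix e assume "e \<in> E"
    then obtain i j where ij: "e = {i, j}" "i \<noteq> j" "i \<in> {1..n}" "j \<in> {1..n}"
      by (rule simple_graph_on_edgeE[OF graph])
    then have "1 \<le> Poly_Mapping.lookup \<mu> i + Poly_Mapping.lookup \<mu> j"
      using symb \<open>e \<in> E\<close> unfolding symb_monomial_def by blast
    then show "?C \<inter> e \<noteq> {}"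
      using ij by (auto simp: in_keys_iff)
  qed simp
  moreover have "\<mu> = 0 + indicator_exp ?C + (\<mu> - indicator_exp ?C)"
    by (rule poly_mapping_eqI) (auto simp: lookup_add lookup_minus lookup_indicator_exp in_keys_iff)
  ultimately show ?thesis
    unfolding One_nat_def cover_monomial.simps by blast
qed

text \<open>One unit is taken from every variable occurring in \<open>\<mu>\<close> and a second one from every
  variable of exponent at least \<open>q + 2\<close>; on an edge with exponent sum at least \<open>q + 2\<close> this
  removes at least two units, and never more than the edge can spare.\<close>
lemma symb_monomial_decompose:
  assumes "symb_monomial E (q + 2) \<mu>"
  obtains \<delta> \<mu>' where "\<mu> = \<delta> + \<mu>'" "symb_monomial E 2 \<delta>" "symb_monomial E q \<mu>'"
proof -
  define cut :: "nat \<Rightarrow> nat" where "cut x = (if 1 \<le> x then 1 else 0) + (if q + 2 \<le> x then 1 else 0)" for x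
  have cut_bounds: "2 \<le> cut a + cut b \<and> q \<le> (a - cut a) + (b - cut b)" if "q + 2 \<le> a + b" for a b
    using that unfolding cut_def by (auto split: if_splits)
  let ?big = "{i \<in> Poly_Mapping.keys \<mu>. q + 2 \<le> Poly_Mapping.lookup \<mu> i}"
  define \<delta> where "\<delta> = indicator_exp (Poly_Mapping.keys \<mu>) + indicator_exp ?big"
  have lookup_\<delta>: "Poly_Mapping.lookup \<delta> i = cut (Poly_Mapping.lookup \<mu> i)" for i
    unfolding \<delta>_def cut_def by (auto simp: lookup_add lookup_indicator_exp in_keys_iff)
  have "\<mu> = \<delta> + (\<mu> - \<delta>)"
    by (rule poly_mapping_eqI) (simp add: lookup_add lookup_minus lookup_\<delta> cut_def)
  moreover have "symb_monomial E 2 \<delta> \<and> symb_monomial E q (\<mu> - \<delta>)"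
    using assms cut_bounds unfolding symb_monomial_def lookup_minus lookup_\<delta> by blast
  ultimately show thesis
    using that by blast
qed

lemma cover_monomial_sum_of_symb_monomials:
  assumes graph: "simple_graph_on n E"
    and base: "\<And>\<mu> \<nu>. Poly_Mapping.keys \<mu> \<subseteq> {1..n} \<Longrightarrow> Poly_Mapping.keys \<nu> \<subseteq> {1..n} \<Longrightarrow>
      symb_monomial E 2 \<mu> \<Longrightarrow> symb_monomial E 2 \<nu> \<Longrightarrow> cover_monomial n E 3 (\<mu> + \<nu>)"
  shows "1 \<le> p \<Longrightarrow> Poly_Mapping.keys \<mu> \<subseteq> {1..n} \<Longrightarrow> Poly_Mapping.keys \<nu> \<subseteq> {1..n} \<Longrightarrow>
    symb_monomial E p \<mu> \<Longrightarrow> symb_monomial E p \<nu> \<Longrightarrow> cover_monomial n E (p + 1) (\<mu> + \<nu>)"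
proof (induction p arbitrary: \<mu> \<nu> rule: less_induct)
  case (less p)
  show ?case
  proof (cases "p \<le> 2")
    case True
    then consider "p = 1" | "p = 2"
      using less.prems(1) by linarith
    then show ?thesis
    proof cases
      case 1
      then show ?thesis
        using less.prems symb_monomial_one_imp_cover_monomial[OF graph]
          cover_monomial_add[of n E 1 \<mu> 1 \<nu>] by simp
    next
      case 2
      then show ?thesis
        using less.prems base by simp
    qed
  next
    case False
    define q where "q = p - 2"
    have p: "p = q + 2" "1 \<le> q"
      using False by (simp_all add: q_def)
    obtain \<delta> \<mu>' where \<mu>: "\<mu> = \<delta> + \<mu>'" "symb_monomial E 2 \<delta>" "symb_monomial E q \<mu>'"
      using less.prems(4) p(1) symb_monomial_decompose by blast
    obtain \<epsilon> \<nu>' where \<nu>: "\<nu> = \<epsilon> + \<nu>'" "symb_monomial E 2 \<epsilon>" "symb_monomial E q \<nu>'"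
      using less.prems(5) p(1) symb_monomial_decompose by blast
    have keys: "Poly_Mapping.keys \<delta> \<subseteq> {1..n}" "Poly_Mapping.keys \<mu>' \<subseteq> {1..n}"
      "Poly_Mapping.keys \<epsilon> \<subseteq> {1..n}" "Poly_Mapping.keys \<nu>' \<subseteq> {1..n}"
      using less.prems(2,3) unfolding \<mu>(1) \<nu>(1) keys_add_exponents by auto
    have "cover_monomial n E 3 (\<delta> + \<epsilon>)"
      using base keys \<mu>(2) \<nu>(2) by blast
    moreover have "cover_monomial n E (q + 1) (\<mu>' + \<nu>')"
      using less.IH[of q] p keys \<mu>(3) \<nu>(3) by simp
    ultimately have "cover_monomial n E (3 + (q + 1)) ((\<delta> + \<epsilon>) + (\<mu>' + \<nu>'))"
      by (rule cover_monomial_add)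
    moreover have "3 + (q + 1) = Suc (p + 1)" "(\<delta> + \<epsilon>) + (\<mu>' + \<nu>') = \<mu> + \<nu>"
      using p(1) by (simp_all add: \<mu>(1) \<nu>(1) ac_simps)
    ultimately have "cover_monomial n E (Suc (p + 1)) (\<mu> + \<nu>)"
      by (simp only:)
    then show ?thesis
      by (rule cover_monomial_Suc_imp)
  qed
qed

lemma symb_monomial_minus_single:
  assumes "symb_monomial E m \<mu>"
  shows "symb_monomial E (m - 1) (\<mu> - Poly_Mapping.single k 1)"
  unfolding symb_monomial_def
proof (intro allI impI)
  fix i j
  assume "{i, j} \<in> E" "i \<noteq> j"
  then have "m \<le> Poly_Mapping.lookup \<mu> i + Poly_Mapping.lookup \<mu> j"
    using assms unfolding symb_monomial_def by blast
  then show "m - 1 \<le> Poly_Mapping.lookup (\<mu> - Poly_Mapping.single k 1) i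
      + Poly_Mapping.lookup (\<mu> - Poly_Mapping.single k 1) j"
    using \<open>i \<noteq> j\<close> by (auto simp: lookup_minus lookup_single when_def)
qed

lemma deriv_ideal_subset_cover_symb_pow:
  assumes graph: "simple_graph_on n E" and J: "J \<subseteq> cover_symb_pow n E k"
  shows "deriv_ideal n J \<subseteq> cover_symb_pow n E (k - 1)"
  unfolding deriv_ideal_def cover_symb_pow_eq_monomial_ideal[OF graph]
proof (intro gen_ideal_subset_monomial_ideal upward_closed_symb_monomial subsetI)
  fix d assume "d \<in> {pderiv_var i f |i f. i \<in> {1..n} \<and> f \<in> J}"
  then obtain i f where "d = pderiv_var i f" "f \<in> monomial_ideal n (symb_monomial E k)"
    using J cover_symb_pow_eq_monomial_ideal[OF graph] by blast
  then show "d \<in> monomial_ideal n (symb_monomial E (k - 1))"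
    using pderiv_var_mem_monomial_ideal symb_monomial_minus_single by blast
qed

lemma ideal_pow_two_subset_pow_cover_ideal:
  fixes S :: "'a::comm_ring_1 mpoly set"
  assumes graph: "simple_graph_on n E"
    and hyp: "ideal_pow n (cover_symb_pow n E 2 :: 'a mpoly set) 2 \<subseteq> ideal_pow n (cover_ideal n E) 3"
    and S: "S \<subseteq> cover_symb_pow n E (k - 1)" and k: "2 \<le> k"
  shows "ideal_pow n S 2 \<subseteq> ideal_pow n (cover_ideal n E) k"
proof -
  note symb = cover_symb_pow_eq_monomial_ideal[OF graph, where 'a = 'a]
  note pow = pow_cover_ideal_eq_monomial_ideal[where 'a = 'a]
  have base: "cover_monomial n E 3 (\<mu> + \<nu>)"
    if "Poly_Mapping.keys \<mu> \<subseteq> {1..n}" "Poly_Mapping.keys \<nu> \<subseteq> {1..n}"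
      "symb_monomial E 2 \<mu>" "symb_monomial E 2 \<nu>" for \<mu> \<nu>
  proof -
    have "monom \<mu> * monom \<nu> \<in> ideal_pow n (cover_symb_pow n E 2 :: 'a mpoly set) 2"
      using that by (intro mult_mem_ideal_pow_two) (simp_all add: symb monom_mem_monomial_ideal_iff)
    then have "(monom (\<mu> + \<nu>) :: 'a mpoly) \<in> ideal_pow n (cover_ideal n E) 3"
      using hyp by (auto simp: mult_single)
    then show ?thesis
      by (simp add: pow monom_mem_monomial_ideal_iff)
  qed
  have "ideal_pow n S 2 \<subseteq> monomial_ideal n (cover_monomial n E (k - 1 + 1))"
    using S k unfolding symb
    by (intro ideal_pow_two_subset_monomial_ideal upward_closed_symb_monomial upward_closed_cover_monomial
        cover_monomial_sum_of_symb_monomials[OF graph base]) (auto simp: upward_closed_symb_monomial)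
  then show ?thesis
    using k by (simp add: pow)
qed

theorem proposition2p8:
  fixes n :: nat and E :: "nat set set"
    and I :: "('a::field_char_0) mpoly set"
  assumes graph: "simple_graph_on n E"
    and I_def: "I = cover_ideal n E"
    and hyp: "ideal_pow n (cover_symb_pow n E 2 :: 'a mpoly set) 2 \<subseteq> ideal_pow n I 3"
  shows "(\<forall>k\<ge>2. ideal_pow n (cover_symb_pow n E (k - 1) :: 'a mpoly set) 2 \<subseteq> ideal_pow n I k)
    \<and> (\<forall>k\<ge>2. \<forall>J :: 'a mpoly set. homogeneous_ideal n J \<and> ideal_pow n I k \<subseteq> J
                 \<and> J \<subseteq> cover_symb_pow n E k \<longrightarrow> strongly_golod n J)"
proof -
  have square: "ideal_pow n S 2 \<subseteq> ideal_pow n I k"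
    if "S \<subseteq> cover_symb_pow n E (k - 1)" "2 \<le> k" for S :: "'a mpoly set" and k
    using ideal_pow_two_subset_pow_cover_ideal[OF graph hyp[unfolded I_def] that] I_def by simp
  have "strongly_golod n J"
    if "2 \<le> k" "ideal_pow n I k \<subseteq> J" "J \<subseteq> cover_symb_pow n E k" for k and J :: "'a mpoly set"
    using square[OF deriv_ideal_subset_cover_symb_pow[OF graph that(3)] that(1)] that(2)
    unfolding strongly_golod_def by blast
  then show ?thesis
    using square by blast
qed

end
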